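(* Let $T$ be a tree of order $n>10$ that is not isomorphic to the path $P_n$. Then for every integer $k$ with $2\le k\le n-2$, the graph $F_k(T)$ is non-planar.
   Context: For a simple graph $G=(V,E)$ on $n$ vertices and an integer $1\le k<n$, the $k$-token graph $F_k(G)$ is the graph whose vertices are all $k$-element subsets of $V$, two such subsets $A,B$ being adjacent whenever their symmetric difference $A\triangle B$ is a pair $\{a,b\}$ with $a$ adjacent to $b$ in $G$. *)

theory Defs
  imports "Graph_Theory.Kuratowski"
begin

definition simple_graph :: "'a set \<Rightarrow> ('a \<times> 'a) set \<Rightarrow> bool" where
  "simple_graph V E \<longleftrightarrow> finite V \<and> E \<subseteq> V \<times> V \<and> sym E \<and> (\<forall>x. (x, x) \<notin> E)"

definition connected_graph :: "'a set \<Rightarrow> ('a \<times> 'a) set \<Rightarrow> bool" where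
  "connected_graph V E \<longleftrightarrow> (\<forall>u\<in>V. \<forall>v\<in>V. (u, v) \<in> E\<^sup>*)"

definition has_cycle :: "'a set \<Rightarrow> ('a \<times> 'a) set \<Rightarrow> bool" where
  "has_cycle V E \<longleftrightarrow> (\<exists>xs. 3 \<le> length xs \<and> distinct xs \<and> set xs \<subseteq> V \<and>
      (\<forall>i < length xs. (xs ! i, xs ! ((i + 1) mod length xs)) \<in> E))"

definition is_tree :: "'a set \<Rightarrow> ('a \<times> 'a) set \<Rightarrow> bool" where
  "is_tree V E \<longleftrightarrow> simple_graph V E \<and> V \<noteq> {} \<and> connected_graph V E \<and> \<not> has_cycle V E"

definition iso_to_path :: "'a set \<Rightarrow> ('a \<times> 'a) set \<Rightarrow> bool" where
  "iso_to_path V E \<longleftrightarrow> (\<exists>f. bij_betw f V {0..<card V} \<and>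
      (\<forall>u\<in>V. \<forall>v\<in>V. (u, v) \<in> E \<longleftrightarrow> (f u = f v + 1 \<or> f v = f u + 1)))"

text \<open>The k-token graph, as a symmetric pair digraph.\<close>
definition token_graph :: "'a set \<Rightarrow> ('a \<times> 'a) set \<Rightarrow> nat \<Rightarrow> 'a set pair_pre_digraph" where
  "token_graph V E k = \<lparr> pverts = {A. A \<subseteq> V \<and> card A = k},
     parcs = {(A, B). A \<subseteq> V \<and> card A = k \<and> B \<subseteq> V \<and> card B = k \<and>
        (\<exists>a b. (A - B) \<union> (B - A) = {a, b} \<and> (a, b) \<in> E)} \<rparr>"

end

theory Submission
  imports Defs "HOL-Library.Product_Lexorder"
begin

text \<open>
  Let P be a longest path of the tree T. As T is not a path, some vertex x off P is adjacent
  to an inner vertex of P. Suppose T contains none of five small trees: the star K_{1,5}, the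
  spiders with legs of lengths 1, 1, 1, 2 and 1, 1, 4, and the two trees consisting of two vertices
  of degree 3 at distance 1 or 2 together with two further neighbours of each. If P has 3 vertices,
  T is a star with at most 5 vertices. Otherwise P has at most 7 vertices, x is the only vertex off
  P adjacent to P, and the maximality of P leaves room for at most two more vertices, hanging
  below x; so T has at most 10 vertices.

  Each of the five trees S, with m \<le> 7 vertices, has an explicit subdivision of K_5 or K_{3,3} in
  its 2-token graph. It is carried into F_k(T) by adding k - 2 fixed tokens outside S or, when
  there is no room for them, by first passing to the isomorphic F_{m-2}(S) (complementing the
  token sets) and then adding k - m + 2 fixed tokens.
\<close>

section \<open>Kuratowski subgraphs of pair digraphs\<close>

definition kuratowski_subgraph :: "'a pair_pre_digraph \<Rightarrow> bool" where
  "kuratowski_subgraph G \<longleftrightarrow> (\<exists>K H. (K\<^bsub>3,3\<^esub> (with_proj K) \<or> K\<^bsub>5\<^esub> (with_proj K)) \<and> subdivision_pair K H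
      \<and> pverts H \<subseteq> pverts G \<and> parcs H \<subseteq> parcs G)"

lemma not_kuratowski_planar_if_kuratowski_subgraph:
  assumes "pair_wf_digraph G" and "kuratowski_subgraph G"
  shows "\<not> kuratowski_planar (with_proj G)"
proof -
  interpret G: pair_wf_digraph G by fact
  obtain K H where K: "K\<^bsub>3,3\<^esub> (with_proj K) \<or> K\<^bsub>5\<^esub> (with_proj K)" and sub: "subdivision_pair K H"
    and H: "pverts H \<subseteq> pverts G" "parcs H \<subseteq> parcs G"
    using assms(2) unfolding kuratowski_subgraph_def by blast
  interpret H: pair_bidirected_digraph H using sub by (rule bidirected_digraphI_subdivision)
  have "subgraph (with_proj H) (with_proj G)"
    by (rule subgraphI) (use H in \<open>auto simp: compatible_def intro: H.wf_digraph G.wf_digraph\<close>)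
  then show ?thesis using K sub unfolding kuratowski_planar_def by blast
qed

definition pair_image :: "('a \<Rightarrow> 'b) \<Rightarrow> 'a pair_pre_digraph \<Rightarrow> 'b pair_pre_digraph" where
  "pair_image f G = \<lparr>pverts = f ` pverts G, parcs = map_prod f f ` parcs G\<rparr>"

lemma pair_bidirected_digraph_pair_image:
  assumes "pair_bidirected_digraph G" and "inj_on f (pverts G)"
  shows "pair_bidirected_digraph (pair_image f G)"
proof -
  interpret G: pair_bidirected_digraph G by fact
  show ?thesis
  proof
    fix e assume "e \<in> parcs (pair_image f G)"
    then obtain a b where "(a, b) \<in> parcs G" "e = (f a, f b)" by (auto simp: pair_image_def)
    moreover from this(1) have "a \<in> pverts G" "b \<in> pverts G" "a \<noteq> b"
      using G.in_arcsD1 G.in_arcsD2 G.pair_no_loops by fastforce+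
    ultimately show "fst e \<in> pverts (pair_image f G)" "snd e \<in> pverts (pair_image f G)" "fst e \<noteq> snd e"
      using assms(2) by (auto simp: pair_image_def dest: inj_onD)
  next
    show "symmetric (pair_image f G)"
      using G.pair_sym_arcs unfolding symmetric_def sym_def by (auto simp: pair_image_def)
  qed
qed

lemma pair_image_subdivide:
  assumes "pair_wf_digraph H" and "(u, v) \<in> parcs H" and "inj_on f (pverts H \<union> {w})"
  shows "pair_image f (subdivide H (u, v) w) = subdivide (pair_image f H) (f u, f v) (f w)"
proof -
  interpret H: pair_wf_digraph H by fact
  have uv: "u \<in> pverts H" "v \<in> pverts H" using assms(2) H.in_arcsD1 H.in_arcsD2 by auto
  have "map_prod f f ` (parcs H - {(u, v), (v, u)}) = map_prod f f ` parcs H - {(f u, f v), (f v, f u)}"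
  proof (intro equalityI subsetI)
    fix e assume "e \<in> map_prod f f ` (parcs H - {(u, v), (v, u)})"
    then obtain a b where ab: "(a, b) \<in> parcs H - {(u, v), (v, u)}" "e = (f a, f b)" by auto
    then have "a \<in> pverts H" "b \<in> pverts H" using H.in_arcsD1 H.in_arcsD2 by auto
    with ab uv assms(3) show "e \<in> map_prod f f ` parcs H - {(f u, f v), (f v, f u)}"
      by (auto dest: inj_onD)
  qed auto
  then show ?thesis by (simp add: pair_image_def subdivide.simps image_Un)
qed

lemma subdivision_pair_image:
  assumes "subdivision_pair G H" and "inj_on f (pverts H)"
  shows "subdivision_pair (pair_image f G) (pair_image f H)"
  using assms
proof (induction rule: subdivision_pair_induct)
  case base
  then show ?case by (intro subdivision_pair_base pair_bidirected_digraph_pair_image)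
next
  case (divide e w H)
  obtain u v where e: "e = (u, v)" by (cases e)
  interpret H: pair_bidirected_digraph H using divide(3) by (rule bidirected_digraphI_subdivision)
  have inj: "inj_on f (pverts H \<union> {w})" using divide(5) by (simp add: e)
  then have "subdivision_pair (pair_image f G) (pair_image f H)"
    using divide(4) by (auto intro: inj_on_subset)
  moreover have "f w \<notin> pverts (pair_image f H)"
    using inj divide(2) by (auto simp: pair_image_def dest: inj_onD)
  moreover have "(f u, f v) \<in> parcs (pair_image f H)" using divide(1) e by (auto simp: pair_image_def)
  ultimately have "subdivision_pair (pair_image f G) (subdivide (pair_image f H) (f u, f v) (f w))"
    by (intro subdivision_pair_divide)
  then show ?case
    using pair_image_subdivide[OF H.pair_wf_digraph_axioms divide(1)[unfolded e] inj] e by simp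
qed

lemma complete_digraph_pair_image:
  assumes "K\<^bsub>n\<^esub> (with_proj G)" and "inj_on f (pverts G)"
  shows "K\<^bsub>n\<^esub> (with_proj (pair_image f G))"
  using assms unfolding complete_digraph_pair_def
  by (auto simp: pair_image_def card_image dest: inj_onD)

lemma complete_bipartite_digraph_pair_image:
  assumes "K\<^bsub>m,n\<^esub> (with_proj G)" and "inj_on f (pverts G)"
  shows "K\<^bsub>m,n\<^esub> (with_proj (pair_image f G))"
proof -
  obtain U V where UV: "finite (pverts G)" "pverts G = U \<union> V" "U \<inter> V = {}" "card U = m" "card V = n"
    "parcs G = U \<times> V \<union> V \<times> U"
    using assms(1) unfolding complete_bipartite_digraph_pair_def by blast
  have "inj_on f U" "inj_on f V" using assms(2) UV(2) by (auto intro: inj_on_subset)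
  then show ?thesis unfolding complete_bipartite_digraph_pair_def
    using UV assms(2)
    by (intro conjI exI[of _ "f ` U"] exI[of _ "f ` V"])
       (auto simp: pair_image_def card_image dest: inj_onD)
qed

lemma kuratowski_subgraph_image:
  assumes "kuratowski_subgraph G" and "inj_on f (pverts G)" and "f ` pverts G \<subseteq> pverts G'"
    and "\<And>u v. (u, v) \<in> parcs G \<Longrightarrow> (f u, f v) \<in> parcs G'"
  shows "kuratowski_subgraph G'"
proof -
  obtain K H where K: "K\<^bsub>3,3\<^esub> (with_proj K) \<or> K\<^bsub>5\<^esub> (with_proj K)" and sub: "subdivision_pair K H"
    and H: "pverts H \<subseteq> pverts G" "parcs H \<subseteq> parcs G"
    using assms(1) unfolding kuratowski_subgraph_def by blast
  have injH: "inj_on f (pverts H)" using assms(2) H(1) by (rule inj_on_subset)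
  have "pverts K \<subseteq> pverts H" using sub by (induction rule: subdivision_pair_induct) auto
  with injH have "inj_on f (pverts K)" by (rule inj_on_subset)
  then have "K\<^bsub>3,3\<^esub> (with_proj (pair_image f K)) \<or> K\<^bsub>5\<^esub> (with_proj (pair_image f K))"
    using K complete_digraph_pair_image complete_bipartite_digraph_pair_image by blast
  moreover have "subdivision_pair (pair_image f K) (pair_image f H)"
    using sub injH by (rule subdivision_pair_image)
  moreover have "pverts (pair_image f H) \<subseteq> pverts G'" "parcs (pair_image f H) \<subseteq> parcs G'"
    using H assms(3,4) by (auto simp: pair_image_def)
  ultimately show ?thesis unfolding kuratowski_subgraph_def by blast
qed

fun path_arcs :: "'a list \<Rightarrow> ('a \<times> 'a) set" where
  "path_arcs (x # y # zs) = {(x, y), (y, x)} \<union> path_arcs (y # zs)"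
| "path_arcs _ = {}"

lemma path_arcs_subset:
  "path_arcs (u # ws @ [v]) \<subseteq> {(u, v), (v, u)} \<union> {e. fst e \<in> set ws \<or> snd e \<in> set ws}"
proof (induction ws arbitrary: u)
  case (Cons w ws)
  have "path_arcs (u # (w # ws) @ [v]) = {(u, w), (w, u)} \<union> path_arcs (w # ws @ [v])" by simp
  then show ?case using Cons.IH[of w] by auto
qed simp

lemma subdivision_pair_path:
  assumes "subdivision_pair G H" and "(u, v) \<in> parcs H" and "distinct ws" and "set ws \<inter> pverts H = {}"
  shows "subdivision_pair G \<lparr>pverts = pverts H \<union> set ws,
           parcs = (parcs H - {(u, v), (v, u)}) \<union> path_arcs (u # ws @ [v])\<rparr>"
  using assms
proof (induction ws arbitrary: u H)
  case Nil
  interpret H: pair_bidirected_digraph H using Nil(1) by (rule bidirected_digraphI_subdivision)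
  have "(v, u) \<in> parcs H" using Nil(2) H.pair_sym_arcs by (auto simp: symmetric_def elim: symE)
  then have "(parcs H - {(u, v), (v, u)}) \<union> path_arcs [u, v] = parcs H" using Nil(2) by auto
  then show ?case using Nil(1) by (cases H) simp
next
  case (Cons w ws)
  interpret H: pair_bidirected_digraph H using Cons(2) by (rule bidirected_digraphI_subdivision)
  have wH: "w \<notin> pverts H" using Cons by auto
  have uH: "u \<in> pverts H" "v \<in> pverts H" using Cons(3) H.in_arcsD1 H.in_arcsD2 by auto
  define H1 where "H1 = subdivide H (u, v) w"
  have "subdivision_pair G H1" unfolding H1_def by (rule subdivision_pair_divide[OF Cons(3) wH Cons(2)])
  moreover have "(w, v) \<in> parcs H1" "distinct ws" "set ws \<inter> pverts H1 = {}"
    using Cons(4,5) unfolding H1_def by auto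
  ultimately have "subdivision_pair G \<lparr>pverts = pverts H1 \<union> set ws,
           parcs = (parcs H1 - {(w, v), (v, w)}) \<union> path_arcs (w # ws @ [v])\<rparr>"
    by (rule Cons.IH)
  moreover have "pverts H1 \<union> set ws = pverts H \<union> set (w # ws)" unfolding H1_def by auto
  moreover have "(parcs H1 - {(w, v), (v, w)}) \<union> path_arcs (w # ws @ [v])
      = (parcs H - {(u, v), (v, u)}) \<union> path_arcs (u # (w # ws) @ [v])"
    using wH uH H.pair_no_loops[OF Cons(3)] unfolding H1_def by (auto simp: H.in_arcsD1 H.in_arcsD2)
  ultimately show ?case by simp
qed

definition subdivide_paths ::
    "'a pair_pre_digraph \<Rightarrow> ('a \<times> 'a list \<times> 'a) list \<Rightarrow> 'a pair_pre_digraph" where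
  "subdivide_paths K L = \<lparr>pverts = pverts K \<union> (\<Union>(u, ws, v)\<in>set L. set ws),
     parcs = (parcs K - (\<Union>(u, ws, v)\<in>set L. {(u, v), (v, u)}))
       \<union> (\<Union>(u, ws, v)\<in>set L. path_arcs (u # ws @ [v]))\<rparr>"

lemma subdivision_pair_subdivide_paths:
  assumes "pair_bidirected_digraph K"
    and "\<forall>(u, ws, v)\<in>set L. (u, v) \<in> parcs K"
    and "distinct (map (\<lambda>(u, ws, v). {u, v}) L)"
    and "distinct (concat (map (\<lambda>(u, ws, v). ws) L))"
    and "set (concat (map (\<lambda>(u, ws, v). ws) L)) \<inter> pverts K = {}"
  shows "subdivision_pair K (subdivide_paths K L)"
  using assms(2-5)
proof (induction L)
  case Nil
  have "subdivide_paths K [] = K" by (cases K) (simp add: subdivide_paths_def)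
  then show ?case using subdivision_pair_base[OF assms(1)] by simp
next
  case (Cons l L)
  obtain u ws v where l: "l = (u, ws, v)" by (cases l) auto
  interpret K: pair_bidirected_digraph K by (rule assms(1))
  let ?ends = "\<Union>(u, ws, v)\<in>set L. {(u, v), (v, u)}"
  let ?inner = "\<Union>(u, ws, v)\<in>set L. set ws"
  have IH: "subdivision_pair K (subdivide_paths K L)"
    by (rule Cons.IH) (use Cons.prems in fastforce)+
  have uvK: "(u, v) \<in> parcs K" using Cons(2) l by auto
  then have uK: "u \<in> pverts K" "v \<in> pverts K" using K.in_arcsD1 K.in_arcsD2 by auto
  have "{u, v} \<notin> (\<lambda>(u, ws, v). {u, v}) ` set L" using Cons(3) l by auto
  then have ends: "(u, v) \<notin> ?ends" "(v, u) \<notin> ?ends" by (auto simp: insert_commute)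
  have inner: "u \<notin> ?inner" "v \<notin> ?inner" using Cons(5) uK by (auto simp: split_beta)
  have "(u, v) \<in> parcs (subdivide_paths K L)" using uvK ends by (simp add: subdivide_paths_def)
  moreover have "distinct ws" "set ws \<inter> pverts (subdivide_paths K L) = {}"
    using Cons(4,5) l by (auto simp: subdivide_paths_def split_beta)
  ultimately have sub: "subdivision_pair K \<lparr>pverts = pverts (subdivide_paths K L) \<union> set ws,
      parcs = (parcs (subdivide_paths K L) - {(u, v), (v, u)}) \<union> path_arcs (u # ws @ [v])\<rparr>"
    by (rule subdivision_pair_path[OF IH])
  have "(u, v) \<notin> path_arcs (a # b @ [c]) \<and> (v, u) \<notin> path_arcs (a # b @ [c])"
    if "(a, b, c) \<in> set L" for a b c
    using that ends inner path_arcs_subset[of a b c] by fastforce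
  then have "\<lparr>pverts = pverts (subdivide_paths K L) \<union> set ws,
      parcs = (parcs (subdivide_paths K L) - {(u, v), (v, u)}) \<union> path_arcs (u # ws @ [v])\<rparr>
    = subdivide_paths K (l # L)"
    unfolding l subdivide_paths_def by auto
  with sub show ?case by simp
qed

lemma kuratowski_subgraph_of_paths:
  fixes K :: "'a::linorder pair_pre_digraph" and L :: "('a \<times> 'a list \<times> 'a) list"
  assumes K: "K\<^bsub>3,3\<^esub> (with_proj K) \<or> K\<^bsub>5\<^esub> (with_proj K)"
    and ends: "\<forall>(u, ws, v)\<in>set L. (u, v) \<in> parcs K \<and> u < v"
    and cover: "\<forall>a\<in>pverts K. \<forall>b\<in>pverts K.
      (a, b) \<in> parcs K \<and> a < b \<longrightarrow> (a, b) \<in> (\<lambda>(u, ws, v). (u, v)) ` set L"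
    and distinct_ends: "distinct (map (\<lambda>(u, ws, v). (u, v)) L)"
    and distinct_inner: "distinct (concat (map (\<lambda>(u, ws, v). ws) L))"
    and fresh: "set (concat (map (\<lambda>(u, ws, v). ws) L)) \<inter> pverts K = {}"
    and verts: "pverts K \<subseteq> pverts G"
    and paths: "\<forall>(u, ws, v)\<in>set L. set ws \<subseteq> pverts G \<and> path_arcs (u # ws @ [v]) \<subseteq> parcs G"
  shows "kuratowski_subgraph G"
proof -
  interpret K: pair_graph K using K pair_graphI_complete pair_graphI_complete_bipartite by blast
  have "inj_on (\<lambda>(u, ws, v). {u, v}) (set L)"
  proof (rule inj_onI)
    fix l l' assume l: "l \<in> set L" "l' \<in> set L"
      and eq: "(\<lambda>(u, ws, v). {u, v}) l = (\<lambda>(u, ws, v). {u, v}) l'"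
    obtain u ws v u' ws' v' where "l = (u, ws, v)" "l' = (u', ws', v')" by (cases l, cases l')
    moreover from this have "u < v" "u' < v'" using ends l by auto
    ultimately have "(\<lambda>(u, ws, v). (u, v)) l = (\<lambda>(u, ws, v). (u, v)) l'"
      using eq by (auto simp: doubleton_eq_iff)
    then show "l = l'" using distinct_ends l by (auto simp: distinct_map dest: inj_onD)
  qed
  then have "distinct (map (\<lambda>(u, ws, v). {u, v}) L)"
    using distinct_ends by (simp add: distinct_map)
  then have sub: "subdivision_pair K (subdivide_paths K L)"
    using ends distinct_inner fresh
    by (intro subdivision_pair_subdivide_paths K.pair_bidirected_digraph_axioms) auto
  have "parcs K \<subseteq> (\<Union>(u, ws, v)\<in>set L. {(u, v), (v, u)})"
  proof
    fix e assume e: "e \<in> parcs K"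
    obtain a b where ab: "e = (a, b)" by (cases e)
    have "(b, a) \<in> parcs K" using e ab K.pair_sym_arcs by (auto simp: symmetric_def elim: symE)
    moreover have "a \<noteq> b" using K.pair_no_loops[OF e] ab by simp
    ultimately obtain c d where "(c, d) \<in> parcs K" "c < d" "e = (c, d) \<or> e = (d, c)"
      using e ab by (metis neq_iff)
    moreover from this(1) have "c \<in> pverts K" "d \<in> pverts K" using K.in_arcsD1 K.in_arcsD2 by auto
    ultimately obtain l where "l \<in> set L" "(c, d) = (\<lambda>(u, ws, v). (u, v)) l" "e = (c, d) \<or> e = (d, c)"
      using cover by blast
    then show "e \<in> (\<Union>(u, ws, v)\<in>set L. {(u, v), (v, u)})" by (cases l) auto
  qed
  then have "pverts (subdivide_paths K L) \<subseteq> pverts G" "parcs (subdivide_paths K L) \<subseteq> parcs G"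
    using verts paths by (auto simp: subdivide_paths_def split_beta)
  then show ?thesis using K sub unfolding kuratowski_subgraph_def by blast
qed

definition complete_pair_graph :: "'a list \<Rightarrow> 'a pair_pre_digraph" where
  "complete_pair_graph Bs = \<lparr>pverts = set Bs, parcs = {(u, v). u \<in> set Bs \<and> v \<in> set Bs \<and> u \<noteq> v}\<rparr>"

definition complete_bipartite_pair_graph :: "'a list \<Rightarrow> 'a list \<Rightarrow> 'a pair_pre_digraph" where
  "complete_bipartite_pair_graph Us Vs =
     \<lparr>pverts = set Us \<union> set Vs, parcs = set Us \<times> set Vs \<union> set Vs \<times> set Us\<rparr>"

lemma complete_digraph_complete_pair_graph:
  "distinct Bs \<Longrightarrow> K\<^bsub>length Bs\<^esub> (with_proj (complete_pair_graph Bs))"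
  unfolding complete_digraph_pair_def by (auto simp: complete_pair_graph_def distinct_card)

lemma complete_bipartite_digraph_complete_bipartite_pair_graph:
  assumes "distinct Us" and "distinct Vs" and "set Us \<inter> set Vs = {}"
  shows "K\<^bsub>length Us,length Vs\<^esub> (with_proj (complete_bipartite_pair_graph Us Vs))"
  unfolding complete_bipartite_digraph_pair_def using assms
  by (intro conjI exI[of _ "set Us"] exI[of _ "set Vs"])
     (auto simp: complete_bipartite_pair_graph_def distinct_card)

section \<open>Token graphs\<close>

lemma pair_wf_digraph_token_graph: "pair_wf_digraph (token_graph V E k)"
  by unfold_locales (auto simp: token_graph_def)

lemma kuratowski_subgraph_token_graph_complement:
  assumes "finite U" and "kuratowski_subgraph (token_graph U R j)"
  shows "kuratowski_subgraph (token_graph U R (card U - j))"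
proof (rule kuratowski_subgraph_image[OF assms(2), of "\<lambda>A. U - A"])
  show "inj_on (\<lambda>A. U - A) (pverts (token_graph U R j))"
    by (rule inj_onI) (auto simp: token_graph_def)
  show "(\<lambda>A. U - A) ` pverts (token_graph U R j) \<subseteq> pverts (token_graph U R (card U - j))"
    using assms(1) by (auto simp: token_graph_def card_Diff_subset finite_subset)
  fix A B assume "(A, B) \<in> parcs (token_graph U R j)"
  moreover have "(U - A) - (U - B) \<union> ((U - B) - (U - A)) = (A - B) \<union> (B - A)" if "A \<subseteq> U" "B \<subseteq> U"
    using that by blast
  ultimately show "(U - A, U - B) \<in> parcs (token_graph U R (card U - j))"
    using assms(1) by (auto simp: token_graph_def card_Diff_subset finite_subset)
qed

lemma kuratowski_subgraph_token_graph_extend: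
  assumes "kuratowski_subgraph (token_graph U R j)" and "finite U"
    and "inj_on g U" and "g ` U \<subseteq> V" and "\<And>a b. a \<in> U \<Longrightarrow> b \<in> U \<Longrightarrow> (a, b) \<in> R \<Longrightarrow> (g a, g b) \<in> E"
    and "finite W" and "W \<subseteq> V" and "W \<inter> g ` U = {}"
  shows "kuratowski_subgraph (token_graph V E (j + card W))"
proof (rule kuratowski_subgraph_image[OF assms(1), of "\<lambda>A. g ` A \<union> W"])
  have diff: "(g ` A \<union> W) - (g ` B \<union> W) = g ` (A - B)" if "A \<subseteq> U" "B \<subseteq> U" for A B
  proof -
    have "g ` (A - B) = g ` A - g ` B" using that by (intro inj_on_image_set_diff[OF assms(3)]) auto
    then show ?thesis using that assms(8) by blast
  qed
  have card: "card (g ` A \<union> W) = card A + card W" if "A \<subseteq> U" for A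
  proof -
    have "finite A" using that assms(2) by (rule finite_subset)
    moreover have "inj_on g A" using assms(3) that by (rule inj_on_subset)
    ultimately show ?thesis using that assms(6,8) by (subst card_Un_disjoint) (auto simp: card_image)
  qed
  have sub: "g ` A \<union> W \<subseteq> V" if "A \<subseteq> U" for A
    using that assms(4,7) by blast
  show "inj_on (\<lambda>A. g ` A \<union> W) (pverts (token_graph U R j))"
  proof (rule inj_onI)
    fix A B assume "A \<in> pverts (token_graph U R j)" "B \<in> pverts (token_graph U R j)"
      and "g ` A \<union> W = g ` B \<union> W"
    then show "A = B" using diff[of A B] diff[of B A] by (auto simp: token_graph_def)
  qed
  show "(\<lambda>A. g ` A \<union> W) ` pverts (token_graph U R j) \<subseteq> pverts (token_graph V E (j + card W))"
    using card sub assms(7) by (auto simp: token_graph_def)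
  fix A B assume "(A, B) \<in> parcs (token_graph U R j)"
  then obtain a b where AB: "A \<subseteq> U" "B \<subseteq> U" "card A = j" "card B = j"
    "(A - B) \<union> (B - A) = {a, b}" "(a, b) \<in> R"
    by (auto simp: token_graph_def)
  then have "(g ` A \<union> W) - (g ` B \<union> W) \<union> ((g ` B \<union> W) - (g ` A \<union> W)) = {g a, g b}"
    using diff[of A B] diff[of B A] by (simp add: image_Un[symmetric])
  moreover have "(g a, g b) \<in> E" using AB by (intro assms(5)) auto
  ultimately show "(g ` A \<union> W, g ` B \<union> W) \<in> parcs (token_graph V E (j + card W))"
    using AB card sub assms(7) by (auto simp: token_graph_def)
qed

definition shape_edge :: "(nat \<times> nat) list \<Rightarrow> nat \<Rightarrow> nat \<Rightarrow> bool" where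
  "shape_edge sh x y \<longleftrightarrow> (x, y) \<in> set sh \<or> (y, x) \<in> set sh"

definition token_move :: "(nat \<times> nat) list \<Rightarrow> nat \<times> nat \<Rightarrow> nat \<times> nat \<Rightarrow> bool" where
  "token_move sh p q \<longleftrightarrow>
     (fst p = fst q \<and> shape_edge sh (snd p) (snd q)) \<or> (fst p = snd q \<and> shape_edge sh (snd p) (fst q)) \<or>
     (snd p = fst q \<and> shape_edge sh (fst p) (snd q)) \<or> (snd p = snd q \<and> shape_edge sh (fst p) (fst q))"

text \<open>The 2-token graph of the graph on \<open>{..<m}\<close> with edge list \<open>sh\<close>, with the token set \<open>{a, b}\<close>
  encoded as the pair \<open>(a, b)\<close>, \<open>a < b\<close>, so that its arcs can be decided by simplification.\<close>
definition two_token_graph :: "nat \<Rightarrow> (nat \<times> nat) list \<Rightarrow> (nat \<times> nat) pair_pre_digraph" where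
  "two_token_graph m sh = \<lparr>pverts = {(a, b). a < b \<and> b < m},
     parcs = {(p, q). fst p < snd p \<and> snd p < m \<and> fst q < snd q \<and> snd q < m \<and> token_move sh p q}\<rparr>"

lemma token_move_symmetric_difference:
  assumes "token_move sh (a, b) (c, d)" and "a < b" and "c < d" and "\<forall>(x, y)\<in>set sh. x \<noteq> y"
  shows "\<exists>x y. ({a, b} - {c, d}) \<union> ({c, d} - {a, b}) = {x, y} \<and> shape_edge sh x y"
proof -
  have ne: "x \<noteq> y" if "shape_edge sh x y" for x y using that assms(4) unfolding shape_edge_def by auto
  from assms(1) consider "a = c" "shape_edge sh b d" | "a = d" "shape_edge sh b c"
    | "b = c" "shape_edge sh a d" | "b = d" "shape_edge sh a c"
    unfolding token_move_def by auto
  then show ?thesis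
  proof cases
    case 1 with ne[OF 1(2)] assms(2,3) show ?thesis by (intro exI[of _ b] exI[of _ d]) auto
  next
    case 2 with ne[OF 2(2)] assms(2,3) show ?thesis by (intro exI[of _ b] exI[of _ c]) auto
  next
    case 3 with ne[OF 3(2)] assms(2,3) show ?thesis by (intro exI[of _ a] exI[of _ d]) auto
  next
    case 4 with ne[OF 4(2)] assms(2,3) show ?thesis by (intro exI[of _ a] exI[of _ c]) auto
  qed
qed

lemma kuratowski_subgraph_token_graph_of_two_token_graph:
  assumes "kuratowski_subgraph (two_token_graph m sh)" and "\<forall>(x, y)\<in>set sh. x \<noteq> y"
  shows "kuratowski_subgraph (token_graph {..<m} {(x, y). shape_edge sh x y} 2)"
proof (rule kuratowski_subgraph_image[OF assms(1), of "\<lambda>(a, b). {a, b}"])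
  show "inj_on (\<lambda>(a, b). {a, b}) (pverts (two_token_graph m sh))"
    by (rule inj_onI) (auto simp: two_token_graph_def doubleton_eq_iff)
  show "(\<lambda>(a, b). {a, b}) ` pverts (two_token_graph m sh)
    \<subseteq> pverts (token_graph {..<m} {(x, y). shape_edge sh x y} 2)"
    by (auto simp: two_token_graph_def token_graph_def)
  fix p q assume "(p, q) \<in> parcs (two_token_graph m sh)"
  moreover obtain a b c d where "p = (a, b)" "q = (c, d)" by (cases p, cases q)
  ultimately show "((\<lambda>(a, b). {a, b}) p, (\<lambda>(a, b). {a, b}) q)
    \<in> parcs (token_graph {..<m} {(x, y). shape_edge sh x y} 2)"
    using token_move_symmetric_difference[OF _ _ _ assms(2), of a b c d]
    by (auto simp: two_token_graph_def token_graph_def)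
qed

definition embeds_shape :: "'a set \<Rightarrow> ('a \<times> 'a) set \<Rightarrow> (nat \<times> nat) list \<Rightarrow> 'a list \<Rightarrow> bool" where
  "embeds_shape V E sh xs \<longleftrightarrow> distinct xs \<and> set xs \<subseteq> V \<and>
     (\<forall>(a, b)\<in>set sh. a < length xs \<and> b < length xs \<and> (xs ! a, xs ! b) \<in> E)"

lemma not_kuratowski_planar_token_graph_if_embeds_shape:
  assumes two: "kuratowski_subgraph (two_token_graph (length xs) sh)"
    and loopfree: "\<forall>(x, y)\<in>set sh. x \<noteq> y"
    and emb: "embeds_shape V E sh xs" and "finite V" and "sym E"
    and small: "2 * length xs \<le> card V + 5" and k: "2 \<le> k" "k \<le> card V - 2"
  shows "\<not> kuratowski_planar (with_proj (token_graph V E k))"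
proof -
  let ?m = "length xs" and ?R = "{(x, y). shape_edge sh x y}"
  have dist: "distinct xs" and xsV: "set xs \<subseteq> V" using emb by (auto simp: embeds_shape_def)
  have F2: "kuratowski_subgraph (token_graph {..<?m} ?R 2)"
    using two loopfree by (rule kuratowski_subgraph_token_graph_of_two_token_graph)
  have img: "(!) xs ` {..<?m} = set xs" by (auto simp: in_set_conv_nth)
  have inj: "inj_on ((!) xs) {..<?m}" using dist by (auto intro!: inj_onI simp: nth_eq_iff_index_eq)
  have edges: "(xs ! a, xs ! b) \<in> E" if "(a, b) \<in> ?R" for a b
    using that emb \<open>sym E\<close> by (auto simp: shape_edge_def embeds_shape_def dest: symD)
  have cardR: "card (V - set xs) = card V - ?m"
    using xsV dist \<open>finite V\<close> by (simp add: card_Diff_subset distinct_card)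
  have extend: "kuratowski_subgraph (token_graph V E k)"
    if Fj: "kuratowski_subgraph (token_graph {..<?m} ?R j)" and "j \<le> k" and room: "k - j \<le> card V - ?m"
    for j
  proof -
    obtain W where W: "W \<subseteq> V - set xs" "card W = k - j"
      using obtain_subset_with_card_n[of "k - j" "V - set xs"] room cardR by auto
    have "finite W" using W(1) \<open>finite V\<close> finite_subset by blast
    then have "kuratowski_subgraph (token_graph V E (j + card W))"
      using Fj inj img xsV edges W(1)
      by (intro kuratowski_subgraph_token_graph_extend[of "{..<?m}" ?R j]) auto
    then show ?thesis using W(2) \<open>j \<le> k\<close> by simp
  qed
  show ?thesis
  proof (rule not_kuratowski_planar_if_kuratowski_subgraph[OF pair_wf_digraph_token_graph])
    show "kuratowski_subgraph (token_graph V E k)"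
    proof (cases "k - 2 \<le> card V - ?m")
      case True
      then show ?thesis using extend[OF F2] k by simp
    next
      case False
      have "kuratowski_subgraph (token_graph {..<?m} ?R (?m - 2))"
        using kuratowski_subgraph_token_graph_complement[OF _ F2] by simp
      moreover have "?m - 2 \<le> k" "k - (?m - 2) \<le> card V - ?m" using False small k by linarith+
      ultimately show ?thesis by (rule extend)
    qed
  qed
qed

section \<open>Five obstructions\<close>

lemma kuratowski_complete_pair_graph:
  "distinct Bs \<Longrightarrow> length Bs = 5 \<Longrightarrow>
     K\<^bsub>3,3\<^esub> (with_proj (complete_pair_graph Bs)) \<or> K\<^bsub>5\<^esub> (with_proj (complete_pair_graph Bs))"
  using complete_digraph_complete_pair_graph by fastforce

lemma kuratowski_complete_bipartite_pair_graph:
  "distinct Us \<Longrightarrow> distinct Vs \<Longrightarrow> set Us \<inter> set Vs = {} \<Longrightarrow> length Us = 3 \<Longrightarrow> length Vs = 3 \<Longrightarrow>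
     K\<^bsub>3,3\<^esub> (with_proj (complete_bipartite_pair_graph Us Vs))
     \<or> K\<^bsub>5\<^esub> (with_proj (complete_bipartite_pair_graph Us Vs))"
  using complete_bipartite_digraph_complete_bipartite_pair_graph by fastforce

text \<open>Edge lists of trees on \<open>{..<m}\<close>: the star K_{1,5}, spiders named by the lengths of their
  legs, and double stars whose two centres of degree 3 are at distance 1 or 2.\<close>

definition star_5 :: "(nat \<times> nat) list" where
  "star_5 = [(0, 1), (0, 2), (0, 3), (0, 4), (0, 5)]"

definition spider_1112 :: "(nat \<times> nat) list" where
  "spider_1112 = [(0, 1), (0, 2), (0, 3), (0, 4), (4, 5)]"

definition spider_114 :: "(nat \<times> nat) list" where
  "spider_114 = [(0, 1), (0, 2), (0, 3), (3, 4), (4, 5), (5, 6)]"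

definition double_star_1 :: "(nat \<times> nat) list" where
  "double_star_1 = [(0, 1), (0, 2), (0, 3), (1, 4), (1, 5)]"

definition double_star_2 :: "(nat \<times> nat) list" where
  "double_star_2 = [(0, 1), (1, 2), (0, 3), (0, 4), (2, 5), (2, 6)]"

lemmas kuratowski_data_simps = two_token_graph_def token_move_def shape_edge_def
  complete_pair_graph_def complete_bipartite_pair_graph_def

lemma kuratowski_subgraph_star_5: "kuratowski_subgraph (two_token_graph 6 star_5)"
  by (rule kuratowski_subgraph_of_paths[
        OF kuratowski_complete_pair_graph[of "[(0,2),(0,4),(0,1),(0,5),(0,3)]"],
        where L = "[((0,2),[(2,4)],(0,4)), ((0,2),[(2,3)],(0,3)), ((0,1),[(1,2)],(0,2)), ((0,2),[(2,5)],(0,5)),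
        ((0,4),[(4,5)],(0,5)), ((0,3),[(3,4)],(0,4)), ((0,1),[(1,4)],(0,4)), ((0,1),[(1,3)],(0,3)),
        ((0,1),[(1,5)],(0,5)), ((0,3),[(3,5)],(0,5))]"])
     (simp_all add: kuratowski_data_simps star_5_def)

lemma kuratowski_subgraph_spider_1112: "kuratowski_subgraph (two_token_graph 6 spider_1112)"
  by (rule kuratowski_subgraph_of_paths[
        OF kuratowski_complete_bipartite_pair_graph[of "[(3,4),(2,4),(1,4)]" "[(0,2),(0,5),(0,4)]"],
        where L = "[((0,5),[(3,5)],(3,4)), ((0,2),[(2,3),(0,3)],(3,4)), ((0,4),[],(3,4)), ((0,2),[],(2,4)),
        ((0,2),[(1,2),(0,1)],(1,4)), ((0,4),[],(2,4)), ((0,5),[(2,5)],(2,4)), ((0,5),[(1,5)],(1,4)),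
        ((0,4),[],(1,4))]"])
     (simp_all add: kuratowski_data_simps spider_1112_def)

lemma kuratowski_subgraph_spider_114: "kuratowski_subgraph (two_token_graph 7 spider_114)"
  by (rule kuratowski_subgraph_of_paths[
        OF kuratowski_complete_bipartite_pair_graph[of "[(3,5),(1,5),(2,5)]" "[(0,5),(0,6),(0,4)]"],
        where L = "[((0,4),[(3,4)],(3,5)), ((0,5),[],(3,5)), ((0,6),[(3,6)],(3,5)), ((0,4),[(1,4)],(1,5)),
        ((0,5),[],(1,5)), ((0,6),[(1,6)],(1,5)), ((0,5),[],(2,5)), ((0,6),[(2,6)],(2,5)),
        ((0,4),[(0,3),(2,3),(2,4)],(2,5))]"])
     (simp_all add: kuratowski_data_simps spider_114_def)

lemma kuratowski_subgraph_double_star_1: "kuratowski_subgraph (two_token_graph 6 double_star_1)"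
  by (rule kuratowski_subgraph_of_paths[
        OF kuratowski_complete_pair_graph[of "[(1,2),(0,4),(0,5),(0,1),(1,3)]"],
        where L = "[((0,4),[(2,4)],(1,2)), ((0,5),[(2,5)],(1,2)), ((1,2),[(0,2),(2,3),(0,3)],(1,3)), ((0,1),[],(1,2)),
        ((0,1),[],(0,4)), ((0,4),[(3,4)],(1,3)), ((0,4),[(1,4),(4,5),(1,5)],(0,5)), ((0,5),[(3,5)],(1,3)),
        ((0,1),[],(0,5)), ((0,1),[],(1,3))]"])
     (simp_all add: kuratowski_data_simps double_star_1_def)

lemma kuratowski_subgraph_double_star_2: "kuratowski_subgraph (two_token_graph 7 double_star_2)"
  by (rule kuratowski_subgraph_of_paths[
        OF kuratowski_complete_bipartite_pair_graph[of "[(0,2),(2,3),(2,4)]" "[(0,5),(1,3),(0,6)]"],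
        where L = "[((0,2),[(0,1)],(1,3)), ((0,2),[],(0,5)), ((0,2),[],(0,6)), ((0,5),[(3,5)],(2,3)),
        ((0,5),[(4,5)],(2,4)), ((1,3),[],(2,3)), ((0,6),[(3,6)],(2,3)), ((1,3),[(0,3),(3,4),(0,4),(1,4)],(2,4)),
        ((0,6),[(4,6)],(2,4))]"])
     (simp_all add: kuratowski_data_simps double_star_2_def)

definition obstructions :: "(nat \<times> (nat \<times> nat) list) list" where
  "obstructions = [(6, star_5), (6, spider_1112), (7, spider_114), (6, double_star_1), (7, double_star_2)]"

definition contains_obstruction :: "'a set \<Rightarrow> ('a \<times> 'a) set \<Rightarrow> bool" where
  "contains_obstruction V E \<longleftrightarrow> (\<exists>(m, sh)\<in>set obstructions. \<exists>xs. length xs = m \<and> embeds_shape V E sh xs)"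

lemma not_kuratowski_planar_if_contains_obstruction:
  assumes "simple_graph V E" and "11 \<le> card V" and "2 \<le> k" and "k \<le> card V - 2"
    and "contains_obstruction V E"
  shows "\<not> kuratowski_planar (with_proj (token_graph V E k))"
proof -
  obtain m sh xs where obs: "(m, sh) \<in> set obstructions" and "length xs = m" "embeds_shape V E sh xs"
    using assms(5) unfolding contains_obstruction_def by blast
  moreover have "kuratowski_subgraph (two_token_graph m sh)"
    using obs kuratowski_subgraph_star_5 kuratowski_subgraph_spider_1112 kuratowski_subgraph_spider_114
      kuratowski_subgraph_double_star_1 kuratowski_subgraph_double_star_2
    by (auto simp: obstructions_def)
  moreover have "\<forall>(x, y)\<in>set sh. x \<noteq> y" "m \<le> 7"
    using obs by (auto simp: obstructions_def star_5_def spider_1112_def spider_114_def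
      double_star_1_def double_star_2_def)
  moreover have "finite V" "sym E" using assms(1) by (auto simp: simple_graph_def)
  ultimately show ?thesis
    using assms(2-4) by (intro not_kuratowski_planar_token_graph_if_embeds_shape) auto
qed

lemma contains_obstructionI:
  "(length xs, sh) \<in> set obstructions \<Longrightarrow> embeds_shape V E sh xs \<Longrightarrow> contains_obstruction V E"
  unfolding contains_obstruction_def by blast

lemma contains_obstruction_star_5:
  assumes "distinct [c, a1, a2, a3, a4, a5]" and "set [c, a1, a2, a3, a4, a5] \<subseteq> V"
    and "(c, a1) \<in> E" "(c, a2) \<in> E" "(c, a3) \<in> E" "(c, a4) \<in> E" "(c, a5) \<in> E"
  shows "contains_obstruction V E"
  by (rule contains_obstructionI[of "[c, a1, a2, a3, a4, a5]" star_5])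
     (use assms in \<open>auto simp: obstructions_def embeds_shape_def star_5_def\<close>)

lemma contains_obstruction_spider_1112:
  assumes "distinct [c, a1, a2, a3, b1, b2]" and "set [c, a1, a2, a3, b1, b2] \<subseteq> V"
    and "(c, a1) \<in> E" "(c, a2) \<in> E" "(c, a3) \<in> E" "(c, b1) \<in> E" "(b1, b2) \<in> E"
  shows "contains_obstruction V E"
  by (rule contains_obstructionI[of "[c, a1, a2, a3, b1, b2]" spider_1112])
     (use assms in \<open>auto simp: obstructions_def embeds_shape_def spider_1112_def\<close>)

lemma contains_obstruction_spider_114:
  assumes "distinct [c, a1, a2, b1, b2, b3, b4]" and "set [c, a1, a2, b1, b2, b3, b4] \<subseteq> V"
    and "(c, a1) \<in> E" "(c, a2) \<in> E" "(c, b1) \<in> E" "(b1, b2) \<in> E" "(b2, b3) \<in> E" "(b3, b4) \<in> E"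
  shows "contains_obstruction V E"
  by (rule contains_obstructionI[of "[c, a1, a2, b1, b2, b3, b4]" spider_114])
     (use assms in \<open>auto simp: obstructions_def embeds_shape_def spider_114_def\<close>)

lemma contains_obstruction_double_star_1:
  assumes "distinct [c, d, a1, a2, b1, b2]" and "set [c, d, a1, a2, b1, b2] \<subseteq> V"
    and "(c, d) \<in> E" "(c, a1) \<in> E" "(c, a2) \<in> E" "(d, b1) \<in> E" "(d, b2) \<in> E"
  shows "contains_obstruction V E"
  by (rule contains_obstructionI[of "[c, d, a1, a2, b1, b2]" double_star_1])
     (use assms in \<open>auto simp: obstructions_def embeds_shape_def double_star_1_def\<close>)

lemma contains_obstruction_double_star_2:
  assumes "distinct [c, e, d, a1, a2, b1, b2]" and "set [c, e, d, a1, a2, b1, b2] \<subseteq> V"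
    and "(c, e) \<in> E" "(e, d) \<in> E" "(c, a1) \<in> E" "(c, a2) \<in> E" "(d, b1) \<in> E" "(d, b2) \<in> E"
  shows "contains_obstruction V E"
  by (rule contains_obstructionI[of "[c, e, d, a1, a2, b1, b2]" double_star_2])
     (use assms in \<open>auto simp: obstructions_def embeds_shape_def double_star_2_def\<close>)

section \<open>Longest paths in trees\<close>

lemma simple_graph_sym: "simple_graph V E \<Longrightarrow> sym E"
  by (simp add: simple_graph_def)

lemma simple_graph_edge_in_vertices: "simple_graph V E \<Longrightarrow> (u, w) \<in> E \<Longrightarrow> u \<in> V \<and> w \<in> V"
  by (auto simp: simple_graph_def)

lemma simple_graph_no_loop: "simple_graph V E \<Longrightarrow> (u, u) \<notin> E"
  by (simp add: simple_graph_def)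

definition graph_path :: "'a set \<Rightarrow> ('a \<times> 'a) set \<Rightarrow> 'a list \<Rightarrow> bool" where
  "graph_path V E xs \<longleftrightarrow> distinct xs \<and> set xs \<subseteq> V \<and> successively (\<lambda>u v. (u, v) \<in> E) xs"

lemma graph_path_Cons: "graph_path V E (v # xs) \<longleftrightarrow>
    v \<in> V \<and> v \<notin> set xs \<and> (xs \<noteq> [] \<longrightarrow> (v, hd xs) \<in> E) \<and> graph_path V E xs"
  by (auto simp: graph_path_def successively_Cons)

lemma graph_path_rev: "sym E \<Longrightarrow> graph_path V E xs \<Longrightarrow> graph_path V E (rev xs)"
  unfolding graph_path_def by (auto elim: successively_mono dest: symD)

lemma graph_path_appendD: "graph_path V E (xs @ ys) \<Longrightarrow> graph_path V E xs \<and> graph_path V E ys"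
  by (auto simp: graph_path_def successively_append_iff)

lemma graph_path_drop: "graph_path V E xs \<Longrightarrow> graph_path V E (drop n xs)"
  using graph_path_appendD[of V E "take n xs" "drop n xs"] by simp

lemma graph_path_take: "graph_path V E xs \<Longrightarrow> graph_path V E (take n xs)"
  using graph_path_appendD[of V E "take n xs" "drop n xs"] by simp

lemma graph_path_edge: "graph_path V E xs \<Longrightarrow> Suc i < length xs \<Longrightarrow> (xs ! i, xs ! Suc i) \<in> E"
  using successively_nth[of "\<lambda>u v. (u, v) \<in> E" xs i] by (simp add: graph_path_def)

lemma longest_graph_path_exists:
  assumes "finite V" and "V \<noteq> {}"
  obtains P where "graph_path V E P" and "\<And>Q. graph_path V E Q \<Longrightarrow> length Q \<le> length P"
proof -
  obtain v where "v \<in> V" using assms(2) by blast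
  then have "graph_path V E [v]" by (simp add: graph_path_def)
  moreover have "length Q < Suc (card V)" if "graph_path V E Q" for Q
  proof -
    have "length Q = card (set Q)" using that by (simp add: graph_path_def distinct_card)
    also have "\<dots> \<le> card V" using that assms(1) by (intro card_mono) (auto simp: graph_path_def)
    finally show ?thesis by simp
  qed
  ultimately show ?thesis
    using that ex_has_greatest_nat[of "graph_path V E" "[v]" length "Suc (card V)"] by blast
qed

lemma has_cycle_if_closed_path:
  assumes "graph_path V E xs" and "3 \<le> length xs" and "(last xs, hd xs) \<in> E"
  shows "has_cycle V E"
  unfolding has_cycle_def
proof (intro exI[of _ xs] conjI allI impI)
  fix i assume i: "i < length xs"
  show "(xs ! i, xs ! ((i + 1) mod length xs)) \<in> E"
  proof (cases "Suc i < length xs")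
    case True
    then have "(i + 1) mod length xs = Suc i" by simp
    then show ?thesis using graph_path_edge[OF assms(1) True] by simp
  next
    case False
    with i have "length xs = Suc i" by simp
    moreover have "xs \<noteq> []" using i by auto
    ultimately have "(i + 1) mod length xs = 0" "last xs = xs ! i" "hd xs = xs ! 0"
      by (simp_all add: last_conv_nth hd_conv_nth)
    then show ?thesis using assms(3) by simp
  qed
qed (use assms in \<open>auto simp: graph_path_def\<close>)

lemma iso_to_path_if_hamiltonian_path:
  assumes simple: "simple_graph V E" and acyclic: "\<not> has_cycle V E"
    and path: "graph_path V E P" and spanning: "set P = V"
  shows "iso_to_path V E"
proof -
  have dist: "distinct P" using path by (simp add: graph_path_def)
  have symE: "sym E" using simple by (rule simple_graph_sym)
  have no_chord: "(P ! a, P ! b) \<notin> E" if "a + 2 \<le> b" "b < length P" for a b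
  proof
    assume "(P ! a, P ! b) \<in> E"
    with symE have closing: "(P ! b, P ! a) \<in> E" by (rule symD)
    let ?Q = "drop a (take (Suc b) P)"
    have path_Q: "graph_path V E ?Q" using path by (intro graph_path_drop graph_path_take)
    have len: "length (take (Suc b) P) = Suc b" using that by simp
    then have "3 \<le> length ?Q" using that by simp
    have "hd ?Q = P ! a" "last ?Q = P ! b"
      using len that by (simp_all add: hd_drop_conv_nth last_conv_nth)
    with closing have "(last ?Q, hd ?Q) \<in> E" by simp
    with path_Q \<open>3 \<le> length ?Q\<close> have "has_cycle V E" by (rule has_cycle_if_closed_path)
    with acyclic show False ..
  qed
  have edge_iff: "(P ! a, P ! b) \<in> E \<longleftrightarrow> a = b + 1 \<or> b = a + 1"
    if "a < length P" "b < length P" for a b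
  proof
    assume edge: "(P ! a, P ! b) \<in> E"
    then have "a \<noteq> b" using simple_graph_no_loop[OF simple] by auto
    show "a = b + 1 \<or> b = a + 1"
    proof (rule ccontr)
      assume "\<not> (a = b + 1 \<or> b = a + 1)"
      with \<open>a \<noteq> b\<close> consider "a + 2 \<le> b" | "b + 2 \<le> a" by linarith
      then show False
      proof cases
        case 1
        with no_chord that edge show False by blast
      next
        case 2
        from symE edge have "(P ! b, P ! a) \<in> E" by (rule symD)
        with 2 no_chord that show False by blast
      qed
    qed
  next
    assume "a = b + 1 \<or> b = a + 1"
    then show "(P ! a, P ! b) \<in> E"
      using graph_path_edge[OF path, of a] graph_path_edge[OF path, of b] symE that by (auto dest: symD)
  qed
  define f where "f = the_inv_into {0..<length P} ((!) P)"
  have bij: "bij_betw ((!) P) {0..<length P} V"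
    using bij_betw_nth[OF dist _ spanning[symmetric]] by (simp add: lessThan_atLeast0)
  have "bij_betw f V {0..<card V}"
    unfolding f_def spanning[symmetric] distinct_card[OF dist] using bij spanning
    by (simp add: bij_betw_the_inv_into)
  moreover have "(u, v) \<in> E \<longleftrightarrow> f u = f v + 1 \<or> f v = f u + 1" if "u \<in> V" "v \<in> V" for u v
  proof -
    from that spanning obtain a b where "a < length P" "b < length P" "u = P ! a" "v = P ! b"
      by (auto simp: in_set_conv_nth)
    moreover have "f (P ! c) = c" if "c < length P" for c
      unfolding f_def using the_inv_into_f_f[OF bij_betw_imp_inj_on[OF bij]] that by simp
    ultimately show ?thesis using edge_iff by simp
  qed
  ultimately show ?thesis unfolding iso_to_path_def by (intro exI[of _ f]) blast
qed

lemma closed_subset_eq_vertices: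
  assumes "connected_graph V E" and "S \<subseteq> V" and "x \<in> S"
    and closed: "\<And>u v. u \<in> S \<Longrightarrow> (u, v) \<in> E \<Longrightarrow> v \<in> S"
  shows "S = V"
proof
  show "V \<subseteq> S"
  proof
    fix y assume "y \<in> V"
    then have "(x, y) \<in> E\<^sup>*" using assms(1-3) unfolding connected_graph_def by blast
    then show "y \<in> S" using assms(3) closed by (induction rule: rtrancl_induct) auto
  qed
qed (rule assms(2))

lemma graph_path_segment:
  assumes "graph_path V E P" and "i + n \<le> length P"
  shows "graph_path V E (map ((!) P) [i..<i + n])"
proof -
  have "map ((!) P) [i..<i + n] = take n (drop i P)"
    using assms(2) by (intro nth_equalityI) auto
  then show ?thesis using assms(1) by (simp add: graph_path_drop graph_path_take)
qed

lemma set_segment_subset: "i + n \<le> length xs \<Longrightarrow> set (map ((!) xs) [i..<i + n]) \<subseteq> set xs"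
  by auto

lemma contains_obstruction_if_long_branch:
  assumes "graph_path V E [a0, a1, a2, a3, a4, a5]" and "sym E"
    and "v \<in> V" and "v \<notin> set [a0, a1, a2, a3, a4, a5]" and "(a1, v) \<in> E"
  shows "contains_obstruction V E"
  using assms
  by (intro contains_obstruction_spider_114[of a1 v a0 a2 a3 a4 a5])
     (auto simp: graph_path_def dest: symD)

lemma contains_obstruction_if_pendants_at_same_vertex:
  assumes "graph_path V E [a0, a1, a2, a3]" and "sym E"
    and "x \<in> V" "v \<in> V" "x \<noteq> v" "x \<notin> set [a0, a1, a2, a3]" "v \<notin> set [a0, a1, a2, a3]"
    and "(a1, x) \<in> E" "(a1, v) \<in> E"
  shows "contains_obstruction V E"
  using assms
  by (intro contains_obstruction_spider_1112[of a1 x v a0 a2 a3])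
     (auto simp: graph_path_def dest: symD)

lemma contains_obstruction_if_adjacent_pendants:
  assumes "graph_path V E [a0, a1, a2, a3]" and "sym E"
    and "x \<in> V" "v \<in> V" "x \<noteq> v" "x \<notin> set [a0, a1, a2, a3]" "v \<notin> set [a0, a1, a2, a3]"
    and "(a1, x) \<in> E" "(a2, v) \<in> E"
  shows "contains_obstruction V E"
  using assms
  by (intro contains_obstruction_double_star_1[of a1 a2 x a0 v a3])
     (auto simp: graph_path_def dest: symD)

lemma contains_obstruction_if_pendants_at_distance_2:
  assumes "graph_path V E [a0, a1, a2, a3, a4]" and "sym E"
    and "x \<in> V" "v \<in> V" "x \<noteq> v"
    and "x \<notin> set [a0, a1, a2, a3, a4]" "v \<notin> set [a0, a1, a2, a3, a4]"
    and "(a1, x) \<in> E" "(a3, v) \<in> E"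
  shows "contains_obstruction V E"
  using assms
  by (intro contains_obstruction_double_star_2[of a1 a2 a3 x a0 v a4])
     (auto simp: graph_path_def dest: symD)

lemma contains_obstruction_if_pendant_far_from_end:
  assumes path: "graph_path V E P" and "sym E"
    and v: "v \<in> V" "v \<notin> set P" "(P ! Suc i, v) \<in> E" and long: "i + 6 \<le> length P"
  shows "contains_obstruction V E"
proof -
  have "graph_path V E (map ((!) P) [i..<i + 6])" "v \<notin> set (map ((!) P) [i..<i + 6])"
    using graph_path_segment[OF path long] set_segment_subset[OF long] v(2) by auto
  then show ?thesis
    using v(1,3) \<open>sym E\<close>
    by (intro contains_obstruction_if_long_branch[of V E "P ! i" "P ! Suc i"])
       (auto simp: upt_conv_Cons)
qed

lemma contains_obstruction_if_close_pendants:
  assumes path: "graph_path V E P" and "sym E"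
    and a: "a \<in> V" "a \<notin> set P" "(P ! k, a) \<in> E"
    and b: "b \<in> V" "b \<notin> set P" "(P ! l, b) \<in> E" and "a \<noteq> b"
    and "0 < k" and "k \<le> l" and "l \<le> k + 2" and "Suc l < length P" and "4 \<le> length P"
  shows "contains_obstruction V E"
proof -
  have segment: "graph_path V E (map ((!) Q) [m..<m + n])"
    "a \<notin> set (map ((!) Q) [m..<m + n])" "b \<notin> set (map ((!) Q) [m..<m + n])"
    if "graph_path V E Q" "set Q = set P" "m + n \<le> length Q" for Q m n
    using that set_segment_subset[of m n Q] a(2) b(2) by (auto intro: graph_path_segment)
  obtain k0 where k0: "k = Suc k0" using \<open>0 < k\<close> gr0_conv_Suc by auto
  consider "l = k" "k + 3 \<le> length P" | "l = k" "length P = k + 2" | "l = Suc k" | "l = k + 2"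
    using \<open>k \<le> l\<close> \<open>l \<le> k + 2\<close> \<open>Suc l < length P\<close> by linarith
  then show ?thesis
  proof cases
    case 1
    then show ?thesis
      using segment[OF path refl, of k0 4] k0 a b \<open>a \<noteq> b\<close> \<open>sym E\<close>
      by (intro contains_obstruction_if_pendants_at_same_vertex[of V E "P ! k0" "P ! Suc k0"
          "P ! Suc (Suc k0)" "P ! Suc (Suc (Suc k0))" a b]) (auto simp: upt_conv_Cons)
  next
    case 2
    then have "rev P ! 1 = P ! k" by (simp add: rev_nth)
    then show ?thesis
      using segment[OF graph_path_rev[OF \<open>sym E\<close> path], of 0 4] 2 a b \<open>a \<noteq> b\<close> \<open>sym E\<close>
        \<open>4 \<le> length P\<close>
      by (intro contains_obstruction_if_pendants_at_same_vertex[of V E "rev P ! 0" "rev P ! 1"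
          "rev P ! 2" "rev P ! 3" a b]) (auto simp: upt_conv_Cons numeral_eq_Suc)
  next
    case 3
    then show ?thesis
      using segment[OF path refl, of k0 4] k0 a b \<open>a \<noteq> b\<close> \<open>sym E\<close> \<open>Suc l < length P\<close>
      by (intro contains_obstruction_if_adjacent_pendants[of V E "P ! k0" "P ! Suc k0"
          "P ! Suc (Suc k0)" "P ! Suc (Suc (Suc k0))" a b]) (auto simp: upt_conv_Cons)
  next
    case 4
    then show ?thesis
      using segment[OF path refl, of k0 5] k0 a b \<open>a \<noteq> b\<close> \<open>sym E\<close> \<open>Suc l < length P\<close>
      by (intro contains_obstruction_if_pendants_at_distance_2[of V E "P ! k0" "P ! Suc k0"
          "P ! Suc (Suc k0)" "P ! Suc (Suc (Suc k0))" "P ! Suc (Suc (Suc (Suc k0)))" a b])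
         (auto simp: upt_conv_Cons)
  qed
qed

context
  fixes V :: "'a set" and E :: "('a \<times> 'a) set" and P :: "'a list"
  assumes simple: "simple_graph V E"
    and path: "graph_path V E P"
    and longest: "\<And>Q. graph_path V E Q \<Longrightarrow> length Q \<le> length P"
begin

lemma pendant_not_at_end:
  assumes "v \<in> V" and "v \<notin> set P" and "(P ! j, v) \<in> E" and "j < length P"
  shows "0 < j" and "Suc j < length P"
proof -
  note sym = simple_graph_sym[OF simple]
  have "(v, P ! j) \<in> E" using sym assms(3) by (rule symD)
  show "0 < j"
  proof (rule ccontr)
    assume "\<not> 0 < j"
    then have "graph_path V E (v # P)"
      using assms \<open>(v, P ! j) \<in> E\<close> path by (auto simp: graph_path_Cons hd_conv_nth)
    then show False using longest[of "v # P"] by simp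
  qed
  show "Suc j < length P"
  proof (rule ccontr)
    assume "\<not> Suc j < length P"
    with assms(4) have "length P = Suc j" "P \<noteq> []" by auto
    then have "hd (rev P) = P ! j" by (simp add: hd_rev last_conv_nth)
    then have "graph_path V E (v # rev P)"
      using assms \<open>(v, P ! j) \<in> E\<close> graph_path_rev[OF sym path] by (auto simp: graph_path_Cons)
    then show False using longest[of "v # rev P"] by simp
  qed
qed

lemma pendant_index_bounds:
  assumes no_obstruction: "\<not> contains_obstruction V E"
    and v: "v \<in> V" "v \<notin> set P" "(P ! j, v) \<in> E" "j < length P"
  shows "j \<le> 3" and "length P \<le> j + 4"
proof -
  note sym = simple_graph_sym[OF simple]
  have "0 < j" "Suc j < length P" using pendant_not_at_end[OF v] by auto
  then obtain i where "j = Suc i" using gr0_conv_Suc by auto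
  then show "length P \<le> j + 4"
    using contains_obstruction_if_pendant_far_from_end[OF path sym v(1,2), of i] v(3) no_obstruction
    by fastforce
  have "rev P ! Suc (length P - Suc (Suc j)) = P ! j"
    using \<open>Suc j < length P\<close> by (simp add: rev_nth Suc_diff_Suc)
  then have "length P < length P - Suc (Suc j) + 6"
    using contains_obstruction_if_pendant_far_from_end[OF graph_path_rev[OF sym path] sym v(1),
        of "length P - Suc (Suc j)"] v(2,3) no_obstruction
    by fastforce
  with \<open>Suc j < length P\<close> show "j \<le> 3" by linarith
qed

lemma pendant_unique:
  assumes no_obstruction: "\<not> contains_obstruction V E" and "4 \<le> length P"
    and x: "x \<in> V" "x \<notin> set P" "(P ! i, x) \<in> E" "i < length P"
    and v: "v \<in> V" "v \<notin> set P" "(P ! j, v) \<in> E" "j < length P"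
  shows "v = x"
proof (rule ccontr)
  assume "v \<noteq> x"
  note bounds = pendant_not_at_end[OF x] pendant_index_bounds[OF no_obstruction x]
    pendant_not_at_end[OF v] pendant_index_bounds[OF no_obstruction v]
  note close_pendants = contains_obstruction_if_close_pendants[OF path simple_graph_sym[OF simple]]
  have "contains_obstruction V E"
  proof (cases "i \<le> j")
    case True
    then show ?thesis
      using close_pendants[OF x(1-3) v(1-3)] \<open>v \<noteq> x\<close> bounds \<open>4 \<le> length P\<close> by simp
  next
    case False
    then show ?thesis
      using close_pendants[OF v(1-3) x(1-3)] \<open>v \<noteq> x\<close> bounds \<open>4 \<le> length P\<close> by simp
  qed
  with no_obstruction show False ..
qed

lemma card_vertices_le_5_if_length_3:
  assumes "connected_graph V E" and no_obstruction: "\<not> contains_obstruction V E" and "length P = 3"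
  shows "card V \<le> 5"
proof -
  note sym = simple_graph_sym[OF simple] and no_loop = simple_graph_no_loop[OF simple]
    and in_V = simple_graph_edge_in_vertices[OF simple]
  define c where "c = P ! 1"
  define N where "N = {v. (c, v) \<in> E}"
  have finite: "finite N" using simple in_V by (auto simp: N_def simple_graph_def intro: finite_subset)
  have ends: "P ! 0 \<in> N" "P ! 2 \<in> N" "P ! 0 \<noteq> P ! 2" "c \<in> V"
    using graph_path_edge[OF path, of 0] graph_path_edge[OF path, of 1] sym path \<open>length P = 3\<close>
    by (auto simp: N_def c_def graph_path_def nth_eq_iff_index_eq numeral_eq_Suc dest: symD)
  have V_eq: "insert c N = V"
  proof (rule closed_subset_eq_vertices[OF assms(1), where x = c])
    show "insert c N \<subseteq> V" using ends in_V by (auto simp: N_def)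
    fix u w assume u: "u \<in> insert c N" and "(u, w) \<in> E"
    show "w \<in> insert c N"
    proof (rule ccontr)
      assume w: "w \<notin> insert c N"
      then have "u \<noteq> c" using \<open>(u, w) \<in> E\<close> by (auto simp: N_def)
      obtain t where "t \<in> {P ! 0, P ! 2}" "t \<noteq> u" using ends by auto
      then have "graph_path V E [w, u, c, t]"
        using u w \<open>u \<noteq> c\<close> \<open>(u, w) \<in> E\<close> ends in_V sym no_loop
        by (auto simp: graph_path_def N_def dest: symD)
      then show False using longest[of "[w, u, c, t]"] \<open>length P = 3\<close> by simp
    qed
  qed simp
  have card_N: "card N \<le> 4"
  proof (rule ccontr)
    assume "\<not> card N \<le> 4"
    then obtain S where "S \<subseteq> N" "card S = 5" using obtain_subset_with_card_n[of 5 N] by auto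
    moreover have "finite S" using finite \<open>S \<subseteq> N\<close> by (rule finite_subset[rotated])
    then obtain xs where "set xs = S" "distinct xs" using finite_distinct_list by blast
    moreover have "length xs = 5" using distinct_card[OF \<open>distinct xs\<close>] \<open>set xs = S\<close> \<open>card S = 5\<close> by simp
    then obtain a1 a2 a3 a4 a5 where "xs = [a1, a2, a3, a4, a5]" by (auto simp: numeral_eq_Suc length_Suc_conv)
    ultimately have "set [a1, a2, a3, a4, a5] \<subseteq> N" "distinct [a1, a2, a3, a4, a5]" by auto
    then have "contains_obstruction V E"
      using ends no_loop in_V
      by (intro contains_obstruction_star_5[of c a1 a2 a3 a4 a5]) (auto simp: N_def)
    with no_obstruction show False ..
  qed
  have "card (insert c N) \<le> Suc (card N)" using finite by (simp add: card_insert_if)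
  with V_eq card_N show ?thesis by simp
qed

lemma pendant_child_unique:
  assumes no_obstruction: "\<not> contains_obstruction V E"
    and x: "x \<in> V" "x \<notin> set P" "(P ! i, x) \<in> E" "i < length P"
    and y: "y1 \<notin> set P" "y2 \<notin> set P" "(x, y1) \<in> E" "(x, y2) \<in> E"
  shows "y1 = y2"
proof (rule ccontr)
  assume "y1 \<noteq> y2"
  note sym = simple_graph_sym[OF simple] and no_loop = simple_graph_no_loop[OF simple]
    and in_V = simple_graph_edge_in_vertices[OF simple]
  have "0 < i" "Suc i < length P" using pendant_not_at_end[OF x] by auto
  then obtain i0 where i0: "i = Suc i0" "i0 + 3 \<le> length P" by (auto dest: gr0_implies_Suc)
  then have "graph_path V E (map ((!) P) [i0..<i0 + 3])" "set (map ((!) P) [i0..<i0 + 3]) \<subseteq> set P"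
    using graph_path_segment[OF path] set_segment_subset by auto
  then have "contains_obstruction V E"
    using i0 x y \<open>y1 \<noteq> y2\<close> in_V no_loop sym
    by (intro contains_obstruction_double_star_1[of x "P ! i" y1 y2 "P ! i0" "P ! Suc i"])
       (auto simp: upt_conv_Cons graph_path_def dest: symD)
  with no_obstruction show False ..
qed

lemma pendant_grandchild_unique:
  assumes no_obstruction: "\<not> contains_obstruction V E"
    and x: "x \<in> V" "x \<notin> set P" "(P ! i, x) \<in> E" "i < length P"
    and y: "y \<notin> set P" "(x, y) \<in> E"
    and z: "z1 \<notin> set P" "z2 \<notin> set P" "z1 \<noteq> x" "z2 \<noteq> x" "(y, z1) \<in> E" "(y, z2) \<in> E"
  shows "z1 = z2"
proof (rule ccontr)
  assume "z1 \<noteq> z2"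
  note sym = simple_graph_sym[OF simple] and no_loop = simple_graph_no_loop[OF simple]
    and in_V = simple_graph_edge_in_vertices[OF simple]
  have "graph_path V E (y # x # drop i P)"
    using x y path in_V no_loop sym set_drop_subset[of i P]
    by (auto simp: graph_path_Cons graph_path_drop hd_drop_conv_nth dest: symD)
  then have "2 \<le> i" using longest[of "y # x # drop i P"] by simp
  moreover have "Suc i < length P" using pendant_not_at_end[OF x] by auto
  ultimately obtain i0 where i0: "i = Suc (Suc i0)" "i0 + 3 \<le> length P" by (auto dest: le_Suc_ex)
  then have "graph_path V E (map ((!) P) [i0..<i0 + 3])" "set (map ((!) P) [i0..<i0 + 3]) \<subseteq> set P"
    using graph_path_segment[OF path] set_segment_subset by auto
  then have "contains_obstruction V E"
    using i0 x y z \<open>z1 \<noteq> z2\<close> in_V no_loop sym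
    by (intro contains_obstruction_spider_114[of y z1 z2 x "P ! i" "P ! Suc i0" "P ! i0"])
       (auto simp: upt_conv_Cons graph_path_def dest: symD)
  with no_obstruction show False ..
qed

lemma card_vertices_le_10:
  assumes "connected_graph V E" and no_obstruction: "\<not> contains_obstruction V E" and "4 \<le> length P"
    and x: "x \<in> V" "x \<notin> set P" "(P ! i, x) \<in> E" "i < length P"
  shows "card V \<le> 10"
proof -
  note sym = simple_graph_sym[OF simple] and no_loop = simple_graph_no_loop[OF simple]
    and in_V = simple_graph_edge_in_vertices[OF simple]
  have unique: "w = x" if u: "u \<in> set P" and "w \<notin> set P" "(u, w) \<in> E" for u w
  proof -
    obtain j where "j < length P" "u = P ! j" using u by (auto simp: in_set_conv_nth)
    then show ?thesis using pendant_unique[OF no_obstruction \<open>4 \<le> length P\<close> x] that in_V by blast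
  qed
  define Y where "Y = {y. (x, y) \<in> E} - set P"
  define Z where "Z = {z. \<exists>y\<in>Y. (y, z) \<in> E} - {x}"
  have Y: "y \<in> V" "y \<notin> set P" "y \<noteq> x" "(x, y) \<in> E" if "y \<in> Y" for y
    using that in_V no_loop by (auto simp: Y_def)
  have Z: "z \<in> V" "z \<notin> set P" "z \<noteq> x" "\<exists>y\<in>Y. (y, z) \<in> E" if "z \<in> Z" for z
  proof -
    obtain y where y: "y \<in> Y" "(y, z) \<in> E" and "z \<noteq> x" using \<open>z \<in> Z\<close> by (auto simp: Z_def)
    from sym y(2) have "(z, y) \<in> E" by (rule symD)
    then show "z \<in> V" "z \<notin> set P" "z \<noteq> x" "\<exists>y\<in>Y. (y, z) \<in> E"
      using unique[of z y] Y[OF y(1)] y in_V \<open>z \<noteq> x\<close> by auto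
  qed
  have "finite Y" "finite Z"
    using Y(1) Z(1) simple finite_subset[of Y V] finite_subset[of Z V] by (auto simp: simple_graph_def)
  have card_Y: "card Y \<le> 1"
    unfolding One_nat_def card_le_Suc0_iff_eq[OF \<open>finite Y\<close>]
  proof (intro ballI)
    fix y1 y2 assume "y1 \<in> Y" "y2 \<in> Y"
    with Y show "y1 = y2" by (intro pendant_child_unique[OF no_obstruction x]) auto
  qed
  have card_Z: "card Z \<le> 1"
    unfolding One_nat_def card_le_Suc0_iff_eq[OF \<open>finite Z\<close>]
  proof (intro ballI)
    fix z1 z2 assume "z1 \<in> Z" "z2 \<in> Z"
    obtain y1 where "y1 \<in> Y" "(y1, z1) \<in> E" using Z(4)[OF \<open>z1 \<in> Z\<close>] by blast
    obtain y2 where "y2 \<in> Y" "(y2, z2) \<in> E" using Z(4)[OF \<open>z2 \<in> Z\<close>] by blast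
    have "y1 = y2" using Y \<open>y1 \<in> Y\<close> \<open>y2 \<in> Y\<close> by (intro pendant_child_unique[OF no_obstruction x]) auto
    then show "z1 = z2"
      using Y[OF \<open>y1 \<in> Y\<close>] Z[OF \<open>z1 \<in> Z\<close>] Z[OF \<open>z2 \<in> Z\<close>] \<open>(y1, z1) \<in> E\<close> \<open>(y2, z2) \<in> E\<close>
      by (intro pendant_grandchild_unique[OF no_obstruction x, of y1]) auto
  qed
  have "set P \<union> insert x (Y \<union> Z) = V"
  proof (rule closed_subset_eq_vertices[OF assms(1), where x = x])
    show "set P \<union> insert x (Y \<union> Z) \<subseteq> V" using path x Y Z by (auto simp: graph_path_def)
    fix u w assume u: "u \<in> set P \<union> insert x (Y \<union> Z)" and "(u, w) \<in> E"
    show "w \<in> set P \<union> insert x (Y \<union> Z)"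
    proof (rule ccontr)
      assume w: "w \<notin> set P \<union> insert x (Y \<union> Z)"
      have "u \<notin> set P \<union> insert x Y" using u w \<open>(u, w) \<in> E\<close> unique by (auto simp: Y_def Z_def)
      then obtain y where "u \<in> Z" "y \<in> Y" "(y, u) \<in> E" using u Z by blast
      then have "graph_path V E (w # u # y # x # drop i P)"
        using w \<open>(u, w) \<in> E\<close> Y[OF \<open>y \<in> Y\<close>] Z[OF \<open>u \<in> Z\<close>] x path set_drop_subset[of i P]
          in_V no_loop sym
        by (auto simp: graph_path_Cons graph_path_drop hd_drop_conv_nth dest: symD)
      then show False using longest[of "w # u # y # x # drop i P"] pendant_index_bounds[OF no_obstruction x] by simp
    qed
  qed simp
  then have "card V \<le> card (set P) + card (insert x (Y \<union> Z))"
    using card_Un_le[of "set P" "insert x (Y \<union> Z)"] by simp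
  moreover have "card (insert x (Y \<union> Z)) \<le> Suc (card Y + card Z)"
    using \<open>finite Y\<close> \<open>finite Z\<close> card_Un_le[of Y Z] by (simp add: card_insert_if)
  moreover have "card (set P) = length P" using path by (simp add: graph_path_def distinct_card)
  ultimately show ?thesis using card_Y card_Z pendant_index_bounds[OF no_obstruction x] by linarith
qed
end

lemma contains_obstruction_if_not_path:
  assumes tree: "is_tree V E" and "11 \<le> card V" and not_path: "\<not> iso_to_path V E"
  shows "contains_obstruction V E"
proof (rule ccontr)
  assume no_obstruction: "\<not> contains_obstruction V E"
  have simple: "simple_graph V E" and "V \<noteq> {}" and connected: "connected_graph V E"
    and acyclic: "\<not> has_cycle V E"
    using tree by (auto simp: is_tree_def)
  then obtain P where path: "graph_path V E P"
    and longest: "\<And>Q. graph_path V E Q \<Longrightarrow> length Q \<le> length P"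
    using longest_graph_path_exists[of V E] by (auto simp: simple_graph_def)
  obtain v where "v \<in> V" using \<open>V \<noteq> {}\<close> by blast
  then have "P \<noteq> []" using longest[of "[v]"] by (auto simp: graph_path_def)
  have "set P \<noteq> V" using iso_to_path_if_hamiltonian_path[OF simple acyclic path] not_path by blast
  then obtain u x where "u \<in> set P" "(u, x) \<in> E" "x \<notin> set P"
    using closed_subset_eq_vertices[OF connected, of "set P" "hd P"] path \<open>P \<noteq> []\<close>
    by (auto simp: graph_path_def)
  then obtain i where x: "x \<in> V" "x \<notin> set P" "(P ! i, x) \<in> E" "i < length P"
    using simple by (auto simp: in_set_conv_nth simple_graph_def)
  have "0 < i" "Suc i < length P" using pendant_not_at_end[OF simple path longest x] by auto
  then consider "length P = 3" | "4 \<le> length P" by linarith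
  then show False
  proof cases
    case 1
    with card_vertices_le_5_if_length_3[OF simple path longest connected no_obstruction]
      \<open>11 \<le> card V\<close> show False by simp
  next
    case 2
    with card_vertices_le_10[OF simple path longest connected no_obstruction _ x]
      \<open>11 \<le> card V\<close> show False by simp
  qed
qed

theorem theorem7:
  fixes V :: "'a set" and E :: "('a \<times> 'a) set" and k :: nat
  assumes "is_tree V E"
    and "card V > 10"
    and "\<not> iso_to_path V E"
    and "2 \<le> k" and "k \<le> card V - 2"
  shows "\<not> kuratowski_planar (with_proj (token_graph V E k))"
proof (rule not_kuratowski_planar_if_contains_obstruction)
  show "simple_graph V E" using assms(1) by (simp add: is_tree_def)
  show "contains_obstruction V E" using assms(1-3) by (intro contains_obstruction_if_not_path) auto
qed (use assms in auto)

end
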